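(* Let $\mathbb{R}^4_+ := \{x \in \mathbb{R}^4 : x_2^2 + x_3^2 + x_4^2 \le 2x_1x_2,\ x_1 \ge 0\}$ and let $A$ be the block diagonal matrix with rows $(0,1,0,0),(0,0,0,0),(0,0,0,4\pi),(0,0,-\pi,0)$. Identifying $(\mathbb{R}^4)'$ with $\mathbb{R}^4$ via the standard inner product, the dual cone is $\{x : x_3^2 + x_4^2 \le x_1^2 + 2x_1x_2,\ x_1\ge -x_2\}$, and both $(e^{tA})_{t\ge0}$ (with respect to $\mathbb{R}^4_+$) and its dual semigroup $(e^{tA^T})_{t\ge0}$ (with respect to the dual cone) are individually eventually nonnegative, while $(e^{tA})_{t\ge0}$ is not uniformly eventually nonnegative.
   Context: For a finite-dimensional real vector space $X$ ordered by a closed cone $X_+$ with non-empty interior and $A: X\to X$ linear, $(e^{tA})_{t\ge0}$ is individually eventually nonnegative if for each $x\in X_+$ there is $t_0\ge0$ with $e^{tA}x\in X_+$ for all $t\ge t_0$; uniformly eventually nonnegative if there is $t_0\ge0$ with $e^{tA}X_+\subseteq X_+$ for all $t\ge t_0$. The dual cone is $X'_+ := \{x' : \langle x', x\rangle\ge0\ \forall x\in X_+\}$. *)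

theory Defs
  imports "HOL-Analysis.Analysis"
begin

definition mexp_apply :: "real^'n^'n \<Rightarrow> real \<Rightarrow> real^'n \<Rightarrow> real^'n" where
  "mexp_apply A t x = (\<Sum>k. (t ^ k / fact k) *\<^sub>R (((\<lambda>y. A *v y) ^^ k) x))"

definition dual_cone :: "(real^'n) set \<Rightarrow> (real^'n) set" where
  "dual_cone K = {y. \<forall>x\<in>K. 0 \<le> y \<bullet> x}"

definition indiv_ev_nonneg :: "real^'n^'n \<Rightarrow> (real^'n) set \<Rightarrow> bool" where
  "indiv_ev_nonneg A K \<longleftrightarrow>
     (\<forall>x\<in>K. \<exists>t0\<ge>0. \<forall>t\<ge>t0. mexp_apply A t x \<in> K)"

definition unif_ev_nonneg :: "real^'n^'n \<Rightarrow> (real^'n) set \<Rightarrow> bool" where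
  "unif_ev_nonneg A K \<longleftrightarrow>
     (\<exists>t0\<ge>0. \<forall>t\<ge>t0. \<forall>x\<in>K. mexp_apply A t x \<in> K)"

definition cone4 :: "(real^4) set" where
  "cone4 = {x. (x$2)^2 + (x$3)^2 + (x$4)^2 \<le> 2 * x$1 * x$2 \<and> x$1 \<ge> 0}"

definition A4 :: "real^4^4" where
  "A4 = vector [vector [0, 1, 0, 0],
                vector [0, 0, 0, 0],
                vector [0, 0, 0, 4 * pi],
                vector [0, 0, - pi, 0]]"

end

theory Submission
  imports Defs
begin

text \<open>
  The generator A is a nilpotent shear on the coordinates 1, 2 plus the generator of an
  elliptic rotation on the coordinates 3, 4, so e^{tA} x = (x1 + t x2, x2, R(t) (x3, x4)) with
  R(t) periodic and preserving the quadratic form a^2 + 4 b^2. For x in the cone with x2 > 0 the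
  slack 2 (x1 + t x2) x2 - x2^2 of the cone inequality grows linearly in t and eventually absorbs
  the bounded rotated part, while x2 = 0 forces x to be a fixed point. The dual semigroup
  behaves in the same way on the dual cone, which is computed from the self-duality of the
  Lorentz cone: in the coordinates x1, x1 - x2, x3, x4 the cone is a Lorentz cone.
  Uniform eventual nonnegativity fails because at quarter periods R(t) maps (0, b) to (2 b, 0):
  for the boundary point ((1 + b^2)/2, 1, 0, b) this costs 3 b^2 against a linear gain of 2 t.
\<close>

subsection \<open>Exponential series\<close>

lemma mexp_apply_eqI:
  fixes M :: "real^'n^'n"
  assumes "\<And>i. (\<lambda>k. t^k / fact k * ((\<lambda>y. M *v y) ^^ k) x $ i) sums L $ i"
  shows "mexp_apply M t x = L"
proof -
  have "(\<lambda>k. (t^k / fact k) *\<^sub>R ((\<lambda>y. M *v y) ^^ k) x) sums L"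
    unfolding sums_def
  proof (rule vec_tendstoI)
    fix i
    show "((\<lambda>n. (\<Sum>k<n. (t^k / fact k) *\<^sub>R ((\<lambda>y. M *v y) ^^ k) x) $ i)
        \<longlongrightarrow> L $ i) sequentially"
      using assms[of i] unfolding sums_def by (simp add: sum_component)
  qed
  then show ?thesis
    unfolding mexp_apply_def by (rule sums_unique[symmetric])
qed

lemma exp_series_vanishing_from_2:
  fixes u :: "nat \<Rightarrow> real"
  assumes "\<And>k. 2 \<le> k \<Longrightarrow> u k = 0"
  shows "(\<lambda>k. t^k / fact k * u k) sums (u 0 + t * u 1)"
proof -
  have "(\<lambda>k. t^k / fact k * u k) sums (\<Sum>k\<in>{0,1}. t^k / fact k * u k)"
    by (rule sums_finite) (use assms in auto)
  then show ?thesis by simp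
qed

lemma coupled_recurrence_closed_form:
  fixes u w :: "nat \<Rightarrow> real"
  assumes u: "\<And>k. u (Suc k) = p * w k" and w: "\<And>k. w (Suc k) = q * u k"
  shows "u (2*m) = (p*q)^m * u 0" and "u (2*m + 1) = (p*q)^m * p * w 0"
proof -
  have "u (2*m) = (p*q)^m * u 0 \<and> w (2*m) = (p*q)^m * w 0"
    by (induction m) (simp_all add: u w)
  then show "u (2*m) = (p*q)^m * u 0" and "u (2*m + 1) = (p*q)^m * p * w 0"
    by (simp_all add: u)
qed

lemma exp_series_coupled_recurrence:
  fixes u w :: "nat \<Rightarrow> real"
  assumes u: "\<And>k. u (Suc k) = p * w k" and w: "\<And>k. w (Suc k) = q * u k"
    and pq: "p * q = - (r^2)" and "r \<noteq> 0"
  shows "(\<lambda>k. t^k / fact k * u k) sums (cos (r*t) * u 0 + p/r * sin (r*t) * w 0)"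
proof -
  have pq_power: "(p*q)^m = (-1)^m * r^(2*m)" for m
    unfolding pq power_mult by (rule power_minus)
  note closed_form =
    coupled_recurrence_closed_form[where u = u and w = w and p = p and q = q, OF u w]
  have term_eq: "t^k / fact k * u k
      = cos_coeff k * (r*t)^k * u 0 + sin_coeff k * (r*t)^k * (p/r * w 0)" for k
  proof (cases "even k")
    case True
    then obtain m where k: "k = 2*m" by blast
    have "cos_coeff k = (-1)^m / fact k" "sin_coeff k = 0"
      unfolding cos_coeff_def sin_coeff_def using k by auto
    then show ?thesis
      unfolding k closed_form pq_power
      by (simp add: power_mult_distrib)
  next
    case False
    then obtain m where k: "k = 2*m + 1" using oddE by blast
    have "sin_coeff k = (-1)^m / fact k" "cos_coeff k = 0"
      unfolding cos_coeff_def sin_coeff_def using k by auto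
    then show ?thesis
      unfolding k closed_form pq_power
      using \<open>r \<noteq> 0\<close> by (simp add: power_mult_distrib field_simps)
  qed
  have "(\<lambda>k. cos_coeff k * (r*t)^k * u 0 + sin_coeff k * (r*t)^k * (p/r * w 0))
      sums (cos (r*t) * u 0 + sin (r*t) * (p/r * w 0))"
    using cos_converges[of "r*t"] sin_converges[of "r*t"]
    by (intro sums_add sums_mult2) simp_all
  then show ?thesis
    unfolding term_eq by (simp add: mult_ac)
qed

lemma exp_series_component_shear:
  fixes M :: "real^'n^'n"
  assumes Mi: "\<And>y. (M *v y) $ i = y $ j" and Mj: "\<And>y. (M *v y) $ j = 0"
  shows "(\<lambda>k. t^k / fact k * ((\<lambda>y. M *v y) ^^ k) x $ i) sums (x $ i + t * x $ j)"
    and "(\<lambda>k. t^k / fact k * ((\<lambda>y. M *v y) ^^ k) x $ j) sums x $ j"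
proof -
  define P where "P k = ((\<lambda>y. M *v y) ^^ k) x" for k
  have P_Suc: "P (Suc k) = M *v P k" for k
    unfolding P_def by simp
  have Pj: "1 \<le> k \<Longrightarrow> P k $ j = 0" for k
    by (cases k) (simp_all add: P_Suc Mj)
  have Pi: "2 \<le> k \<Longrightarrow> P k $ i = 0" for k
    by (cases k) (simp_all add: P_Suc Mi Pj)
  show "(\<lambda>k. t^k / fact k * P k $ i) sums (x $ i + t * x $ j)"
    using exp_series_vanishing_from_2[of "\<lambda>k. P k $ i" t] Pi
    by (simp add: P_def Mi)
  show "(\<lambda>k. t^k / fact k * P k $ j) sums x $ j"
    using exp_series_vanishing_from_2[of "\<lambda>k. P k $ j" t] Pj
    by (simp add: P_def Mj)
qed

lemma exp_series_component_rotation: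
  fixes M :: "real^'n^'n"
  assumes Mi: "\<And>y. (M *v y) $ i = p * y $ j" and Mj: "\<And>y. (M *v y) $ j = q * y $ i"
    and "p * q = - (r^2)" and "r \<noteq> 0"
  shows "(\<lambda>k. t^k / fact k * ((\<lambda>y. M *v y) ^^ k) x $ i)
           sums (cos (r*t) * x $ i + p/r * sin (r*t) * x $ j)"
  using exp_series_coupled_recurrence[where u = "\<lambda>k. ((\<lambda>y. M *v y) ^^ k) x $ i"
      and w = "\<lambda>k. ((\<lambda>y. M *v y) ^^ k) x $ j", OF _ _ assms(3,4)]
  by (simp add: Mi Mj)

lemma ex_nonneg_ge_iff_eventually_at_top:
  "(\<exists>t0\<ge>0. \<forall>t\<ge>t0. P t) \<longleftrightarrow> (\<forall>\<^sub>F t in at_top. P (t :: real))"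
  unfolding eventually_at_top_linorder
  by (metis max.cobounded1 max.cobounded2 order_trans)

lemma indiv_ev_nonneg_iff_eventually:
  "indiv_ev_nonneg A K \<longleftrightarrow> (\<forall>x\<in>K. \<forall>\<^sub>F t in at_top. mexp_apply A t x \<in> K)"
  unfolding indiv_ev_nonneg_def ex_nonneg_ge_iff_eventually_at_top ..

lemma unif_ev_nonneg_iff_eventually:
  "unif_ev_nonneg A K \<longleftrightarrow> (\<forall>\<^sub>F t in at_top. \<forall>x\<in>K. mexp_apply A t x \<in> K)"
  unfolding unif_ev_nonneg_def ex_nonneg_ge_iff_eventually_at_top ..

lemma eventually_affine_ge_at_top:
  fixes a b c :: real
  assumes "0 < c"
  shows "\<forall>\<^sub>F t in at_top. b \<le> a + t * c"
  using eventually_ge_at_top[of "(b - a) / c"]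
  by eventually_elim (use assms in \<open>simp add: field_simps\<close>)

lemma frequently_quarter_period:
  "\<exists>\<^sub>F t in at_top. cos (2*pi*t) = 0 \<and> sin (2*pi*t) = 1"
  unfolding frequently_def eventually_at_top_linorder
proof clarsimp
  fix N :: real
  define t where "t = real (nat \<lceil>N\<rceil>) + 1/4"
  have "2*pi*t = real (2 * nat \<lceil>N\<rceil>) * pi + pi/2"
    unfolding t_def by (simp add: algebra_simps)
  then have "cos (2*pi*t) = 0 \<and> sin (2*pi*t) = 1"
    by (simp add: cos_add sin_add)
  moreover have "N \<le> t"
    unfolding t_def by linarith
  ultimately show "\<exists>t\<ge>N. cos (2*pi*t) = 0 \<and> sin (2*pi*t) = 1"
    by blast
qed

subsection \<open>The cone and its dual\<close>

lemma lorentz_cone_self_dual: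
  fixes b :: "'a::real_inner"
  shows "norm b \<le> b0 \<longleftrightarrow> (\<forall>a a0. norm a \<le> a0 \<longrightarrow> 0 \<le> a0 * b0 + a \<bullet> b)"
proof
  assume b: "norm b \<le> b0"
  show "\<forall>a a0. norm a \<le> a0 \<longrightarrow> 0 \<le> a0 * b0 + a \<bullet> b"
  proof (intro allI impI)
    fix a :: 'a and a0 :: real
    assume "norm a \<le> a0"
    with b have "\<bar>a \<bullet> b\<bar> \<le> a0 * b0"
      using Cauchy_Schwarz_ineq2[of a b] by (meson mult_mono norm_ge_zero order_trans)
    then show "0 \<le> a0 * b0 + a \<bullet> b" by linarith
  qed
next
  assume dual: "\<forall>a a0. norm a \<le> a0 \<longrightarrow> 0 \<le> a0 * b0 + a \<bullet> b"
  have "0 \<le> b0"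
    using dual[rule_format, of 0 1] by simp
  moreover have "0 \<le> norm b * (b0 - norm b)"
    using dual[rule_format, of "- b" "norm b"]
    by (simp add: power2_norm_eq_inner[symmetric] power2_eq_square algebra_simps)
  ultimately show "norm b \<le> b0"
    by (cases "norm b = 0") (simp_all add: zero_le_mult_iff)
qed

lemma vector_4 [simp]:
  "(vector [a, b, c, d] :: ('a::zero)^4) $ 1 = a"
  "(vector [a, b, c, d] :: ('a::zero)^4) $ 2 = b"
  "(vector [a, b, c, d] :: ('a::zero)^4) $ 3 = c"
  "(vector [a, b, c, d] :: ('a::zero)^4) $ 4 = d"
  unfolding vector_def by simp_all

lemma inner_4: "(z :: real^4) \<bullet> x = z$1 * x$1 + z$2 * x$2 + z$3 * x$3 + z$4 * x$4"
  by (simp add: inner_vec_def sum_4)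

definition dual_cone4 :: "(real^4) set" where
  "dual_cone4 = {x. (x$3)^2 + (x$4)^2 \<le> (x$1)^2 + 2 * x$1 * x$2 \<and> x$1 \<ge> - x$2}"

lemma cone4_iff_norm: "x \<in> cone4 \<longleftrightarrow> norm (x$1 - x$2, x$3, x$4) \<le> x$1"
  unfolding cone4_def norm_le_square by (simp add: power2_eq_square algebra_simps conj_commute)

lemma dual_cone4_iff_norm: "z \<in> dual_cone4 \<longleftrightarrow> norm (- z$2, z$3, z$4) \<le> z$1 + z$2"
  unfolding dual_cone4_def norm_le_square by (auto simp: power2_eq_square algebra_simps)

lemma dual_cone_cone4: "dual_cone cone4 = dual_cone4"
proof (rule set_eqI)
  fix z :: "real^4"
  let ?b = "(- z$2, z$3, z$4)"
  have "z \<in> dual_cone cone4 \<longleftrightarrow> (\<forall>a a0. norm a \<le> a0 \<longrightarrow> 0 \<le> a0 * (z$1 + z$2) + a \<bullet> ?b)"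
  proof
    assume z: "z \<in> dual_cone cone4"
    show "\<forall>a a0. norm a \<le> a0 \<longrightarrow> 0 \<le> a0 * (z$1 + z$2) + a \<bullet> ?b"
    proof (intro allI impI)
      fix a :: "real \<times> real \<times> real" and a0 :: real
      assume a: "norm a \<le> a0"
      obtain u v w where uvw: "a = (u, v, w)" by (cases a)
      have "vector [a0, a0 - u, v, w] \<in> cone4"
        using a by (simp add: cone4_iff_norm uvw)
      with z have "0 \<le> z \<bullet> vector [a0, a0 - u, v, w]"
        by (simp add: dual_cone_def)
      then show "0 \<le> a0 * (z$1 + z$2) + a \<bullet> ?b"
        by (simp add: inner_4 uvw algebra_simps)
    qed
  next
    assume dual: "\<forall>a a0. norm a \<le> a0 \<longrightarrow> 0 \<le> a0 * (z$1 + z$2) + a \<bullet> ?b"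
    show "z \<in> dual_cone cone4"
      unfolding dual_cone_def
    proof safe
      fix x assume "x \<in> cone4"
      with dual have "0 \<le> x$1 * (z$1 + z$2) + (x$1 - x$2, x$3, x$4) \<bullet> ?b"
        by (simp add: cone4_iff_norm)
      then show "0 \<le> z \<bullet> x"
        by (simp add: inner_4 algebra_simps)
    qed
  qed
  also have "\<dots> \<longleftrightarrow> norm ?b \<le> z$1 + z$2"
    by (rule lorentz_cone_self_dual[symmetric])
  also have "\<dots> \<longleftrightarrow> z \<in> dual_cone4"
    by (rule dual_cone4_iff_norm[symmetric])
  finally show "z \<in> dual_cone cone4 \<longleftrightarrow> z \<in> dual_cone4" .
qed

lemma cone4_component_2_nonneg:
  assumes "x \<in> cone4"
  shows "0 \<le> x$2"
proof -
  have "\<bar>x$1 - x$2\<bar> \<le> norm (x$1 - x$2, x$3, x$4)"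
    using norm_fst_le[of "x$1 - x$2" "(x$3, x$4)"] by simp
  also have "\<dots> \<le> x$1"
    using assms by (simp add: cone4_iff_norm)
  finally show ?thesis by linarith
qed

lemma cone4_components_34_eq_0:
  assumes "x \<in> cone4" and "x$2 = 0"
  shows "x$3 = 0" and "x$4 = 0"
  using assms by (simp_all add: cone4_def sum_power2_le_zero_iff)

lemma dual_cone4_component_1_nonneg:
  assumes "z \<in> dual_cone4"
  shows "0 \<le> z$1"
proof -
  have "\<bar>- z$2\<bar> \<le> norm (- z$2, z$3, z$4)"
    using norm_fst_le[of "- z$2" "(z$3, z$4)"] by simp
  also have "\<dots> \<le> z$1 + z$2"
    using assms by (simp add: dual_cone4_iff_norm)
  finally show ?thesis by linarith
qed

lemma dual_cone4_components_34_eq_0: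
  assumes "z \<in> dual_cone4" and "z$1 = 0"
  shows "z$3 = 0" and "z$4 = 0"
  using assms by (simp_all add: dual_cone4_def sum_power2_le_zero_iff)

subsection \<open>The semigroup and its dual\<close>

lemma A4_mult_component:
  fixes y :: "real^4"
  shows "(A4 *v y) $ 1 = y $ 2" "(A4 *v y) $ 2 = 0"
    "(A4 *v y) $ 3 = 4*pi * y $ 4" "(A4 *v y) $ 4 = -pi * y $ 3"
  by (simp_all add: A4_def matrix_vector_mult_def sum_4)

lemma transpose_A4_mult_component:
  fixes y :: "real^4"
  shows "(transpose A4 *v y) $ 1 = 0" "(transpose A4 *v y) $ 2 = y $ 1"
    "(transpose A4 *v y) $ 3 = -pi * y $ 4" "(transpose A4 *v y) $ 4 = 4*pi * y $ 3"
  by (simp_all add: A4_def matrix_vector_mult_def sum_4 transpose_def)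

lemma mexp_A4:
  fixes x :: "real^4"
  shows "mexp_apply A4 t x = vector [x$1 + t * x$2, x$2,
     cos (2*pi*t) * x$3 + 2 * sin (2*pi*t) * x$4, cos (2*pi*t) * x$4 - sin (2*pi*t) * x$3 / 2]"
proof (rule mexp_apply_eqI)
  have pq: "4*pi * -pi = - ((2*pi)^2)" "-pi * (4*pi) = - ((2*pi)^2)"
    by (simp_all add: power2_eq_square)
  note shear = exp_series_component_shear[of A4 1 2, OF A4_mult_component(1,2)]
  note rot3 = exp_series_component_rotation[of A4 3 _ 4, OF A4_mult_component(3,4) pq(1)]
  note rot4 = exp_series_component_rotation[of A4 4 _ 3, OF A4_mult_component(4,3) pq(2)]
  fix i :: 4
  show "(\<lambda>k. t^k / fact k * ((\<lambda>y. A4 *v y) ^^ k) x $ i) sums (vector [x$1 + t * x$2, x$2,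
     cos (2*pi*t) * x$3 + 2 * sin (2*pi*t) * x$4, cos (2*pi*t) * x$4 - sin (2*pi*t) * x$3 / 2] $ i)"
    using exhaust_4[of i] shear rot3 rot4 by auto
qed

lemma mexp_transpose_A4:
  fixes x :: "real^4"
  shows "mexp_apply (transpose A4) t x = vector [x$1, x$2 + t * x$1,
     cos (2*pi*t) * x$3 - sin (2*pi*t) * x$4 / 2, cos (2*pi*t) * x$4 + 2 * sin (2*pi*t) * x$3]"
proof (rule mexp_apply_eqI)
  have pq: "4*pi * -pi = - ((2*pi)^2)" "-pi * (4*pi) = - ((2*pi)^2)"
    by (simp_all add: power2_eq_square)
  note shear = exp_series_component_shear[of "transpose A4" 2 1,
      OF transpose_A4_mult_component(2,1)]
  note rot3 = exp_series_component_rotation[of "transpose A4" 3 _ 4,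
      OF transpose_A4_mult_component(3,4) pq(2)]
  note rot4 = exp_series_component_rotation[of "transpose A4" 4 _ 3,
      OF transpose_A4_mult_component(4,3) pq(1)]
  fix i :: 4
  show "(\<lambda>k. t^k / fact k * ((\<lambda>y. transpose A4 *v y) ^^ k) x $ i) sums (vector [x$1, x$2 + t * x$1,
     cos (2*pi*t) * x$3 - sin (2*pi*t) * x$4 / 2, cos (2*pi*t) * x$4 + 2 * sin (2*pi*t) * x$3] $ i)"
    using exhaust_4[of i] shear rot3 rot4 by auto
qed

lemma elliptic_rotation_bound:
  fixes a b c d :: real
  assumes "c^2 + d^2 = 1"
  shows "(c*a + 2*d*b)^2 + (c*b - d*a/2)^2 \<le> a^2 + 4*b^2"
proof -
  have "(c*a + 2*d*b)^2 + (c*b - d*a/2)^2 \<le> (c*a + 2*d*b)^2 + 4*(c*b - d*a/2)^2"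
    by simp
  also have "\<dots> = (c^2 + d^2) * (a^2 + 4*b^2)"
    by (simp add: power2_eq_square algebra_simps)
  finally show ?thesis using assms by simp
qed

lemma indiv_ev_nonneg_A4: "indiv_ev_nonneg A4 cone4"
  unfolding indiv_ev_nonneg_iff_eventually
proof
  fix x :: "real^4"
  assume x: "x \<in> cone4"
  then have x1: "0 \<le> x$1" and x2: "0 \<le> x$2"
    by (simp_all add: cone4_def cone4_component_2_nonneg)
  show "\<forall>\<^sub>F t in at_top. mexp_apply A4 t x \<in> cone4"
  proof (cases "x$2 = 0")
    case True
    with x have "mexp_apply A4 t x = x" for t
      by (simp add: mexp_A4 vec_eq_iff forall_4 cone4_components_34_eq_0)
    with x show ?thesis by simp
  next
    case False
    with x2 have "0 < 2 * (x$2)^2" by simp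
    then have "\<forall>\<^sub>F t in at_top.
        (x$2)^2 + ((x$3)^2 + 4 * (x$4)^2) \<le> 2 * x$1 * x$2 + t * (2 * (x$2)^2)"
      by (rule eventually_affine_ge_at_top)
    moreover have "\<forall>\<^sub>F t in at_top. 0 \<le> (t :: real)"
      by (rule eventually_ge_at_top)
    ultimately show ?thesis
    proof eventually_elim
      case (elim t)
      have "(cos (2*pi*t) * x$3 + 2 * sin (2*pi*t) * x$4)^2
          + (cos (2*pi*t) * x$4 - sin (2*pi*t) * x$3 / 2)^2 \<le> (x$3)^2 + 4 * (x$4)^2"
        by (rule elliptic_rotation_bound) simp
      moreover have "2 * (x$1 + t * x$2) * x$2 = 2 * x$1 * x$2 + t * (2 * (x$2)^2)"
        by (simp add: power2_eq_square algebra_simps)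
      moreover have "0 \<le> x$1 + t * x$2"
        using x1 x2 elim(2) by simp
      ultimately show ?case
        using elim(1) unfolding mexp_A4 cone4_def by simp
    qed
  qed
qed

lemma indiv_ev_nonneg_transpose_A4: "indiv_ev_nonneg (transpose A4) dual_cone4"
  unfolding indiv_ev_nonneg_iff_eventually
proof
  fix z :: "real^4"
  assume z: "z \<in> dual_cone4"
  then have z1: "0 \<le> z$1" and z12: "0 \<le> z$1 + z$2"
    by (simp_all add: dual_cone4_def dual_cone4_component_1_nonneg)
  show "\<forall>\<^sub>F t in at_top. mexp_apply (transpose A4) t z \<in> dual_cone4"
  proof (cases "z$1 = 0")
    case True
    with z have "mexp_apply (transpose A4) t z = z" for t
      by (simp add: mexp_transpose_A4 vec_eq_iff forall_4 dual_cone4_components_34_eq_0)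
    with z show ?thesis by simp
  next
    case False
    with z1 have "0 < 2 * (z$1)^2" by simp
    then have "\<forall>\<^sub>F t in at_top.
        (z$4)^2 + 4 * (z$3)^2 \<le> (z$1)^2 + 2 * z$1 * z$2 + t * (2 * (z$1)^2)"
      by (rule eventually_affine_ge_at_top)
    moreover have "\<forall>\<^sub>F t in at_top. 0 \<le> (t :: real)"
      by (rule eventually_ge_at_top)
    ultimately show ?thesis
    proof eventually_elim
      case (elim t)
      have "(cos (2*pi*t) * z$4 + 2 * sin (2*pi*t) * z$3)^2
          + (cos (2*pi*t) * z$3 - sin (2*pi*t) * z$4 / 2)^2 \<le> (z$4)^2 + 4 * (z$3)^2"
        by (rule elliptic_rotation_bound) simp
      moreover have "(z$1)^2 + 2 * z$1 * (z$2 + t * z$1)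
          = (z$1)^2 + 2 * z$1 * z$2 + t * (2 * (z$1)^2)"
        by (simp add: power2_eq_square algebra_simps)
      moreover have "0 \<le> t * z$1"
        using z1 elim(2) by simp
      ultimately show ?case
        using elim(1) z12 unfolding mexp_transpose_A4 dual_cone4_def by simp
    qed
  qed
qed

lemma mexp_A4_quarter_period_leaves_cone4:
  assumes "0 \<le> t" and "cos (2*pi*t) = 0" and "sin (2*pi*t) = 1"
  shows "\<exists>x\<in>cone4. mexp_apply A4 t x \<notin> cone4"
proof
  define b where "b = t + 1"
  let ?x = "vector [(1 + b^2) / 2, 1, 0, b] :: real^4"
  show "?x \<in> cone4"
    by (simp add: cone4_def add_pos_nonneg)
  have "mexp_apply A4 t ?x = vector [(1 + b^2) / 2 + t, 1, 2 * b, 0]"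
    by (simp add: mexp_A4 assms(2,3))
  moreover have "2 * ((1 + b^2) / 2 + t) < 1 + (2 * b)^2"
    using assms(1) unfolding b_def by (simp add: power2_eq_square algebra_simps add_pos_nonneg)
  ultimately show "mexp_apply A4 t ?x \<notin> cone4"
    by (simp add: cone4_def)
qed

lemma not_unif_ev_nonneg_A4: "\<not> unif_ev_nonneg A4 cone4"
proof
  assume "unif_ev_nonneg A4 cone4"
  then have "\<forall>\<^sub>F t in at_top. 0 \<le> t \<and> (\<forall>x\<in>cone4. mexp_apply A4 t x \<in> cone4)"
    unfolding unif_ev_nonneg_iff_eventually by (intro eventually_conj eventually_ge_at_top)
  with frequently_quarter_period
  have "\<exists>\<^sub>F t in at_top. (cos (2*pi*t) = 0 \<and> sin (2*pi*t) = 1)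
      \<and> 0 \<le> t \<and> (\<forall>x\<in>cone4. mexp_apply A4 t x \<in> cone4)"
    by (rule frequently_eventually_frequently)
  then show False
    using mexp_A4_quarter_period_leaves_cone4 by (auto dest: frequently_ex)
qed

theorem mainTheorem6:
  shows "dual_cone cone4 =
           {x :: real^4. (x$3)^2 + (x$4)^2 \<le> (x$1)^2 + 2 * x$1 * x$2 \<and> x$1 \<ge> - x$2}
       \<and> indiv_ev_nonneg A4 cone4
       \<and> indiv_ev_nonneg (transpose A4) (dual_cone cone4)
       \<and> \<not> unif_ev_nonneg A4 cone4"
  using dual_cone_cone4 indiv_ev_nonneg_A4 indiv_ev_nonneg_transpose_A4 not_unif_ev_nonneg_A4
  unfolding dual_cone4_def by simp

end
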